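(* Let $M_K$ be an Oeljeklaus–Toma manifold of complex dimension $m$, and let $\tilde\omega(t)=e^{-t}\omega_{\mathrm{OT}}+(1-e^{-t})\alpha$ with associated Hermitian metric $\tilde g(t)$ (notation in the context). Denote by $\tilde\nabla$, $\tilde T$ and $\widetilde{\mathrm{Rm}}$ the Chern connection, torsion and curvature of $\tilde g$. Then there is a constant $C$ such that for all $t\ge0$: (i) $|\tilde T|_{\tilde g}\le C$; (ii) $|\bar\partial\tilde T|_{\tilde g}+|\tilde\nabla\tilde T|_{\tilde g}+|\widetilde{\mathrm{Rm}}|_{\tilde g}\le C$; (iii) $|\overline{\tilde\nabla}\,\overline{\tilde\nabla}\tilde T|_{\tilde g}+|\tilde\nabla\overline{\tilde\nabla}\tilde T|_{\tilde g}+|\tilde\nabla\widetilde{\mathrm{Rm}}|_{\tilde g}\le C$.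
   Context: Let $K$ be a number field of degree $n=s+2$ over $\mathbb{Q}$ with $s\ge 1$, having exactly $s$ real embeddings $\sigma_1,\dots,\sigma_s$ and exactly one pair of complex conjugate embeddings $\sigma_{s+1},\sigma_{s+2}=\overline{\sigma_{s+1}}$; put $m=s+1$. Let $O_K$ be its ring of integers, $O_K^{*,+}$ the group of units $a$ with $\sigma_i(a)>0$ for $1\le i\le s$, and $G\subset O_K^{*,+}$ an admissible subgroup (rank $s$, with $\{(\log\sigma_1(a),\dots,\log\sigma_s(a)):a\in G\}$ a full lattice in $\mathbb{R}^{m-1}$). With $\mathbb{H}$ the upper half plane, $b\in O_K$ acts on $\mathbb{H}^{m-1}\times\mathbb{C}$ by $z\mapsto z+(\sigma_1(b),\dots,\sigma_m(b))$ and $a\in G$ by $z\mapsto(\sigma_1(a)z_1,\dots,\sigma_m(a)z_m)$; the generated group $\Gamma$ acts freely and properly discontinuously and $M_K=(\mathbb{H}^{m-1}\times\mathbb{C})/\Gamma$. Write $z_j=x_j+\sqrt{-1}y_j$. The $\Gamma$-invariant forms $\alpha=\sqrt{-1}\sum_{i=1}^{m-1}\frac{dz_i\wedge d\bar z_i}{4y_i^2}$, $\beta=\sqrt{-1}(y_1\cdots y_{m-1})dz_m\wedge d\bar z_m$, $\gamma=\sqrt{-1}\sum_{k,\ell=1}^{m-1}\frac{dz_k\wedge d\bar z_\ell}{4y_ky_\ell}$ descend to $M_K$, and $\omega_{\mathrm{OT}}=\alpha+\beta+\gamma$ is a Hermitian metric. The torsion is $\tilde T_{ij\bar\ell}=\partial_i\tilde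 g_{j\bar\ell}-\partial_j\tilde g_{i\bar\ell}$, the Chern curvature $\tilde R_{i\bar jk\bar\ell}=-\partial_i\partial_{\bar j}\tilde g_{k\bar\ell}+\tilde g^{\bar qp}\partial_i\tilde g_{k\bar q}\partial_{\bar j}\tilde g_{p\bar\ell}$, and $\overline{\tilde\nabla}$ denotes the $(0,1)$ part of the Chern connection. *)

theory Defs
  imports "HOL-Analysis.Analysis"
begin

(* Points of the universal cover H^(m-1) x C of M_K, m = s+1.
   Coordinates are indexed 0..s (0-based): z_0..z_(s-1) in H, z_s in C. *)
type_synonym point = "nat \<Rightarrow> complex"

(* a covariant tensor field: index list -> component; the kind list records for
   each slot whether it is an unbarred (False) or barred (True) index *)
type_synonym tensor = "point \<Rightarrow> nat list \<Rightarrow> complex"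

definition OT_cover :: "nat \<Rightarrow> point set" where
  "OT_cover s = {z. \<forall>i<s. Im (z i) > 0}"

definition dX :: "nat \<Rightarrow> (point \<Rightarrow> complex) \<Rightarrow> point \<Rightarrow> complex" where
  "dX k f z = vector_derivative (\<lambda>r::real. f (z(k := z k + of_real r))) (at 0)"

definition dY :: "nat \<Rightarrow> (point \<Rightarrow> complex) \<Rightarrow> point \<Rightarrow> complex" where
  "dY k f z = vector_derivative (\<lambda>r::real. f (z(k := z k + \<i> * of_real r))) (at 0)"

definition del :: "nat \<Rightarrow> (point \<Rightarrow> complex) \<Rightarrow> point \<Rightarrow> complex" where
  "del k f z = (dX k f z - \<i> * dY k f z) / 2"

definition delbar :: "nat \<Rightarrow> (point \<Rightarrow> complex) \<Rightarrow> point \<Rightarrow> complex" where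
  "delbar k f z = (dX k f z + \<i> * dY k f z) / 2"

(* components g_{k lbar} of the forms alpha, beta, gamma (omega = sqrt(-1) g_{k lbar} dz_k ^ dzbar_l) *)
definition alpha_c :: "nat \<Rightarrow> point \<Rightarrow> nat \<Rightarrow> nat \<Rightarrow> complex" where
  "alpha_c s z k l = (if k < s \<and> l = k then complex_of_real (1 / (4 * (Im (z k))\<^sup>2)) else 0)"

definition beta_c :: "nat \<Rightarrow> point \<Rightarrow> nat \<Rightarrow> nat \<Rightarrow> complex" where
  "beta_c s z k l = (if k = s \<and> l = s then complex_of_real (\<Prod>i<s. Im (z i)) else 0)"

definition gamma_c :: "nat \<Rightarrow> point \<Rightarrow> nat \<Rightarrow> nat \<Rightarrow> complex" where
  "gamma_c s z k l = (if k < s \<and> l < s then complex_of_real (1 / (4 * Im (z k) * Im (z l))) else 0)"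

definition gOT :: "nat \<Rightarrow> point \<Rightarrow> nat \<Rightarrow> nat \<Rightarrow> complex" where
  "gOT s z k l = alpha_c s z k l + beta_c s z k l + gamma_c s z k l"

definition gt :: "nat \<Rightarrow> real \<Rightarrow> point \<Rightarrow> nat \<Rightarrow> nat \<Rightarrow> complex" where
  "gt s t z k l = complex_of_real (exp (- t)) * gOT s z k l
                  + complex_of_real (1 - exp (- t)) * alpha_c s z k l"

(* inverse metric: ginv b c = g^{bbar c}, i.e. sum_b g_{a bbar} g^{bbar c} = delta_a^c *)
definition ginv :: "nat \<Rightarrow> (point \<Rightarrow> nat \<Rightarrow> nat \<Rightarrow> complex) \<Rightarrow> point \<Rightarrow> nat \<Rightarrow> nat \<Rightarrow> complex" where
  "ginv m g z = (SOME H. (\<forall>a<m. \<forall>c<m. (\<Sum>b<m. g z a b * H b c) = (if a = c then 1 else 0))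
                      \<and> (\<forall>b c. \<not> (b < m \<and> c < m) \<longrightarrow> H b c = 0))"

definition Chr :: "nat \<Rightarrow> (point \<Rightarrow> nat \<Rightarrow> nat \<Rightarrow> complex) \<Rightarrow> point \<Rightarrow> nat \<Rightarrow> nat \<Rightarrow> nat \<Rightarrow> complex" where
  "Chr m g z i k p = (\<Sum>q<m. ginv m g z q p * del i (\<lambda>w. g w k q) z)"

(* torsion T_{ij lbar} = del_i g_{j lbar} - del_j g_{i lbar}; kinds [F,F,T] *)
definition torsion :: "(point \<Rightarrow> nat \<Rightarrow> nat \<Rightarrow> complex) \<Rightarrow> tensor" where
  "torsion g z I = (if length I = 3 then
      del (I!0) (\<lambda>w. g w (I!1) (I!2)) z - del (I!1) (\<lambda>w. g w (I!0) (I!2)) z else 0)"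

(* Chern curvature R_{i jbar k lbar}; kinds [F,T,F,T] *)
definition curv :: "nat \<Rightarrow> (point \<Rightarrow> nat \<Rightarrow> nat \<Rightarrow> complex) \<Rightarrow> tensor" where
  "curv m g z I = (if length I = 4 then
      - del (I!0) (delbar (I!1) (\<lambda>w. g w (I!2) (I!3))) z
      + (\<Sum>p<m. \<Sum>q<m. ginv m g z q p * del (I!0) (\<lambda>w. g w (I!2) q) z
                                   * delbar (I!1) (\<lambda>w. g w p (I!3)) z)
    else 0)"

(* dbar of the (2,1)-form T: (dbar T)_{ij kbar lbar} = delbar_k T_{ij lbar} - delbar_l T_{ij kbar};
   kinds [F,F,T,T] *)
definition dbarT :: "tensor \<Rightarrow> tensor" where
  "dbarT T z I = (if length I = 4 then
      delbar (I!2) (\<lambda>w. T w [I!0, I!1, I!3]) z - delbar (I!3) (\<lambda>w. T w [I!0, I!1, I!2]) z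
    else 0)"

(* (1,0) part of Chern covariant derivative; new slot prepended (kind False) *)
definition nabla :: "nat \<Rightarrow> (point \<Rightarrow> nat \<Rightarrow> nat \<Rightarrow> complex) \<Rightarrow> bool list \<Rightarrow> tensor \<Rightarrow> tensor" where
  "nabla m g ks A z I = (case I of [] \<Rightarrow> 0 | a # J \<Rightarrow>
      del a (\<lambda>w. A w J) z
      - (\<Sum>r<length J. \<Sum>q<m. (if ks ! r then 0 else Chr m g z a (J!r) q) * A z (J[r := q])))"

(* (0,1) part of Chern covariant derivative; new slot prepended (kind True) *)
definition nablabar :: "nat \<Rightarrow> (point \<Rightarrow> nat \<Rightarrow> nat \<Rightarrow> complex) \<Rightarrow> bool list \<Rightarrow> tensor \<Rightarrow> tensor" where
  "nablabar m g ks A z I = (case I of [] \<Rightarrow> 0 | a # J \<Rightarrow>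
      delbar a (\<lambda>w. A w J) z
      - (\<Sum>r<length J. \<Sum>q<m. (if ks ! r then cnj (Chr m g z a (J!r) q) else 0) * A z (J[r := q])))"

definition tnorm :: "nat \<Rightarrow> (point \<Rightarrow> nat \<Rightarrow> nat \<Rightarrow> complex) \<Rightarrow> bool list \<Rightarrow> tensor \<Rightarrow> point \<Rightarrow> real" where
  "tnorm m g ks A z = sqrt (Re (\<Sum>I\<in>{I. length I = length ks \<and> set I \<subseteq> {..<m}}.
      \<Sum>J\<in>{J. length J = length ks \<and> set J \<subseteq> {..<m}}.
        A z I * cnj (A z J) *
        (\<Prod>r<length ks. if ks ! r then ginv m g z (I!r) (J!r) else ginv m g z (J!r) (I!r))))"

end

theory Submission
  imports Defs
begin

text \<open>Write \<open>y\<^sub>i = Im z\<^sub>i\<close> and \<open>\<epsilon> = e\<^sup>-\<^sup>t\<close>. On the universal cover, every component with index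
  list \<open>I\<close> of \<open>g\<^sub>t\<close>, of its inverse, of the Chern symbols and of all tensors in the statement is a
  constant times \<open>\<epsilon>\<^sup>e \<Prod> y\<^sub>i\<^sup>E\<^sup>i\<close>, where the constant is bounded independently of \<open>t\<close> and the
  exponents are those of \<open>\<Prod>\<^sub>k\<^sub>\<in>\<^sub>I \<nu>\<^sub>k\<close>, with \<open>\<nu>\<^sub>k = 1/y\<^sub>k\<close> for \<open>k < s\<close> and \<open>\<nu>\<^sub>s = (\<epsilon> y\<^sub>1\<cdots>y\<^sub>s)\<^sup>1\<^sup>/\<^sup>2\<close>.
  Such monomials are stable under sums and products, and a Wirtinger derivative in \<open>z\<^sub>k\<close> only sees
  \<open>y\<^sub>k\<close>, so it multiplies by \<open>E\<^sub>k/y\<^sub>k\<close>: exactly the weight of one more index \<open>k\<close>. As \<open>|g\<^sub>t\<^sup>k\<^sup>l| \<le> 4/(\<nu>\<^sub>k \<nu>\<^sub>l)\<close>, the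
  \<open>g\<^sub>t\<close>-norm of such a tensor is bounded by a constant depending only on \<open>s\<close>.\<close>

section \<open>Monomials in the imaginary parts\<close>

lemma OT_cover_Im_pos: "z \<in> OT_cover s \<Longrightarrow> i < s \<Longrightarrow> 0 < Im (z i)"
  by (simp add: OT_cover_def)

lemma OT_cover_prod_Im_pos: "z \<in> OT_cover s \<Longrightarrow> 0 < (\<Prod>i<s. Im (z i))"
  by (rule prod_pos) (auto dest: OT_cover_Im_pos)

definition Im_monomial :: "nat \<Rightarrow> (nat \<Rightarrow> real) \<Rightarrow> point \<Rightarrow> real" where
  "Im_monomial s E z = (\<Prod>i<s. Im (z i) powr E i)"

lemma Im_monomial_add: "Im_monomial s (\<lambda>i. E i + F i) z = Im_monomial s E z * Im_monomial s F z"
  unfolding Im_monomial_def by (simp add: powr_add prod.distrib)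

lemma Im_monomial_cong: "(\<And>i. i < s \<Longrightarrow> E i = F i) \<Longrightarrow> Im_monomial s E z = Im_monomial s F z"
  unfolding Im_monomial_def by (rule prod.cong) auto

lemma Im_monomial_uminus: "z \<in> OT_cover s \<Longrightarrow> Im_monomial s (\<lambda>i. - E i) z = 1 / Im_monomial s E z"
  unfolding Im_monomial_def by (simp add: powr_minus divide_inverse flip: prod_inversef)

lemma Im_monomial_remove:
  "k < s \<Longrightarrow> Im_monomial s E z = Im (z k) powr E k * (\<Prod>i\<in>{..<s}-{k}. Im (z i) powr E i)"
  unfolding Im_monomial_def by (rule prod.remove) auto

definition monomial ::
    "nat \<Rightarrow> real \<Rightarrow> (nat \<Rightarrow> real) \<Rightarrow> real \<Rightarrow> real \<Rightarrow> (point \<Rightarrow> complex) \<Rightarrow> bool" where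
  "monomial s \<epsilon> E e C \<phi> \<longleftrightarrow> (\<exists>c. cmod c \<le> C \<and>
     (\<forall>z\<in>OT_cover s. \<phi> z = c * complex_of_real (\<epsilon> powr e * Im_monomial s E z)))"

lemma monomial_nonneg: "monomial s \<epsilon> E e C \<phi> \<Longrightarrow> 0 \<le> C"
  unfolding monomial_def using norm_ge_zero order_trans by blast

lemma monomial_cong:
  assumes "monomial s \<epsilon> E e C \<phi>" "\<And>i. i < s \<Longrightarrow> E i = E' i" "e = e'"
    "\<And>z. z \<in> OT_cover s \<Longrightarrow> \<phi> z = \<psi> z" "C \<le> C'"
  shows "monomial s \<epsilon> E' e' C' \<psi>"
  using assms Im_monomial_cong[of s E E'] unfolding monomial_def by (metis order_trans)

lemma monomial_zero: "0 \<le> C \<Longrightarrow> monomial s \<epsilon> E e C (\<lambda>z. 0)"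
  unfolding monomial_def by (rule exI[of _ 0]) auto

lemma monomial_add:
  assumes "monomial s \<epsilon> E e C \<phi>" "monomial s \<epsilon> E e D \<psi>"
  shows "monomial s \<epsilon> E e (C + D) (\<lambda>z. \<phi> z + \<psi> z)"
proof -
  obtain c d where "cmod c \<le> C" "cmod d \<le> D"
    "\<forall>z\<in>OT_cover s. \<phi> z = c * complex_of_real (\<epsilon> powr e * Im_monomial s E z)"
    "\<forall>z\<in>OT_cover s. \<psi> z = d * complex_of_real (\<epsilon> powr e * Im_monomial s E z)"
    using assms unfolding monomial_def by blast
  then show ?thesis unfolding monomial_def
    by (intro exI[of _ "c + d"]) (auto simp: distrib_right intro: order_trans[OF norm_triangle_ineq])
qed

lemma monomial_uminus: "monomial s \<epsilon> E e C \<phi> \<Longrightarrow> monomial s \<epsilon> E e C (\<lambda>z. - \<phi> z)"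
  unfolding monomial_def by (metis mult_minus_left norm_minus_cancel)

lemma monomial_diff:
  "monomial s \<epsilon> E e C \<phi> \<Longrightarrow> monomial s \<epsilon> E e D \<psi> \<Longrightarrow> monomial s \<epsilon> E e (C + D) (\<lambda>z. \<phi> z - \<psi> z)"
  using monomial_add[OF _ monomial_uminus[of s \<epsilon> E e D \<psi>]] by simp

lemma monomial_cnj: "monomial s \<epsilon> E e C \<phi> \<Longrightarrow> monomial s \<epsilon> E e C (\<lambda>z. cnj (\<phi> z))"
  unfolding monomial_def by (metis complex_cnj_complex_of_real complex_cnj_mult complex_mod_cnj)

lemma monomial_sum:
  "finite A \<Longrightarrow> (\<And>a. a \<in> A \<Longrightarrow> monomial s \<epsilon> E e (C a) (\<phi> a))
   \<Longrightarrow> monomial s \<epsilon> E e (\<Sum>a\<in>A. C a) (\<lambda>z. \<Sum>a\<in>A. \<phi> a z)"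
proof (induction A rule: finite_induct)
  case empty
  then show ?case by (simp add: monomial_zero)
next
  case (insert x F)
  then show ?case using monomial_add[of s \<epsilon> E e "C x" "\<phi> x"] by simp
qed

lemma monomial_mult:
  assumes "0 < \<epsilon>" "monomial s \<epsilon> E e C \<phi>" "monomial s \<epsilon> F f D \<psi>"
  shows "monomial s \<epsilon> (\<lambda>i. E i + F i) (e + f) (C * D) (\<lambda>z. \<phi> z * \<psi> z)"
proof -
  obtain c d where "cmod c \<le> C" "cmod d \<le> D"
    "\<forall>z\<in>OT_cover s. \<phi> z = c * complex_of_real (\<epsilon> powr e * Im_monomial s E z)"
    "\<forall>z\<in>OT_cover s. \<psi> z = d * complex_of_real (\<epsilon> powr f * Im_monomial s F z)"
    using assms unfolding monomial_def by blast
  then show ?thesis unfolding monomial_def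
    by (intro exI[of _ "c * d"])
      (auto simp: norm_mult Im_monomial_add powr_add intro!: mult_mono order_trans[OF norm_ge_zero])
qed

lemma norm_le_monomial:
  assumes "monomial s \<epsilon> E e C \<phi>" "z \<in> OT_cover s"
  shows "cmod (\<phi> z) \<le> C * (\<epsilon> powr e * Im_monomial s E z)"
proof -
  obtain c where "cmod c \<le> C" "\<phi> z = c * complex_of_real (\<epsilon> powr e * Im_monomial s E z)"
    using assms unfolding monomial_def by blast
  moreover have "0 \<le> Im_monomial s E z"
    unfolding Im_monomial_def by (simp add: prod_nonneg)
  ultimately show ?thesis by (simp add: norm_mult mult_right_mono)
qed

text \<open>Up to factors bounded uniformly in \<open>t\<close>, \<open>metric_scale s (e\<^sup>-\<^sup>t) z k\<close> is the \<open>g\<^sub>t\<close>-length of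
  \<open>\<partial>/\<partial>z\<^sub>k\<close>.\<close>

definition metric_scale :: "nat \<Rightarrow> real \<Rightarrow> point \<Rightarrow> nat \<Rightarrow> real" where
  "metric_scale s \<epsilon> z k = (if k < s then 1 / Im (z k) else sqrt (\<epsilon> * (\<Prod>i<s. Im (z i))))"

definition scale_yexp :: "nat \<Rightarrow> nat \<Rightarrow> nat \<Rightarrow> real" where
  "scale_yexp s k i = (if k < s then (if i = k then -1 else 0) else 1/2)"

definition scale_eexp :: "nat \<Rightarrow> nat \<Rightarrow> real" where
  "scale_eexp s k = (if k < s then 0 else 1/2)"

definition yexp :: "nat \<Rightarrow> nat list \<Rightarrow> nat \<Rightarrow> real" where
  "yexp s I i = (\<Sum>k\<leftarrow>I. scale_yexp s k i)"

definition eexp :: "nat \<Rightarrow> nat list \<Rightarrow> real" where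
  "eexp s I = (\<Sum>k\<leftarrow>I. scale_eexp s k)"

lemma yexp_simps [simp]:
  "yexp s [] i = 0" "yexp s (k # I) i = scale_yexp s k i + yexp s I i"
  by (simp_all add: yexp_def)

lemma eexp_simps [simp]:
  "eexp s [] = 0" "eexp s (k # I) = scale_eexp s k + eexp s I"
  by (simp_all add: eexp_def)

lemma abs_yexp_le: "\<bar>yexp s I i\<bar> \<le> length I"
  by (induction I) (auto simp: scale_yexp_def)

lemma yexp_update:
  "r < length J \<Longrightarrow> yexp s (J[r := q]) i = yexp s J i - scale_yexp s (J!r) i + scale_yexp s q i"
  by (induction J arbitrary: r) (auto split: nat.split)

lemma eexp_update:
  "r < length J \<Longrightarrow> eexp s (J[r := q]) = eexp s J - scale_eexp s (J!r) + scale_eexp s q"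
  by (induction J arbitrary: r) (auto split: nat.split)

lemma metric_scale_pos: "z \<in> OT_cover s \<Longrightarrow> 0 < \<epsilon> \<Longrightarrow> 0 < metric_scale s \<epsilon> z k"
  unfolding metric_scale_def using OT_cover_Im_pos OT_cover_prod_Im_pos by auto

lemma metric_scale_sq:
  "z \<in> OT_cover s \<Longrightarrow> 0 < \<epsilon> \<Longrightarrow> \<not> k < s \<Longrightarrow>
    metric_scale s \<epsilon> z k * metric_scale s \<epsilon> z k = \<epsilon> * (\<Prod>i<s. Im (z i))"
  unfolding metric_scale_def using OT_cover_prod_Im_pos[of z s] by (simp flip: power2_eq_square)

lemma metric_scale_eq_monomial:
  assumes z: "z \<in> OT_cover s" and \<epsilon>: "0 < \<epsilon>"
  shows "\<epsilon> powr scale_eexp s k * Im_monomial s (scale_yexp s k) z = metric_scale s \<epsilon> z k"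
proof (cases "k < s")
  case True
  have "Im_monomial s (scale_yexp s k) z = Im (z k) powr (-1) * (\<Prod>i\<in>{..<s}-{k}. Im (z i) powr 0)"
    unfolding Im_monomial_remove[OF True] by (auto simp: scale_yexp_def True intro!: prod.cong)
  also have "(\<Prod>i\<in>{..<s}-{k}. Im (z i) powr 0) = 1"
    using z by (auto intro!: prod.neutral dest: OT_cover_Im_pos)
  finally show ?thesis
    using True \<epsilon> OT_cover_Im_pos[OF z True] by (simp add: scale_eexp_def metric_scale_def powr_minus_divide)
next
  case False
  have "Im_monomial s (scale_yexp s k) z = (\<Prod>i<s. Im (z i)) powr (1/2)"
    unfolding Im_monomial_def using False by (simp add: scale_yexp_def prod_powr_distrib)
  then show ?thesis
    using False \<epsilon> OT_cover_prod_Im_pos[OF z]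
    by (simp add: scale_eexp_def metric_scale_def powr_half_sqrt real_sqrt_mult)
qed

lemma prod_metric_scale_eq_monomial:
  assumes z: "z \<in> OT_cover s" and \<epsilon>: "0 < \<epsilon>"
  shows "\<epsilon> powr eexp s I * Im_monomial s (yexp s I) z = (\<Prod>r<length I. metric_scale s \<epsilon> z (I!r))"
proof (induction I)
  case Nil
  show ?case using z \<epsilon> by (auto simp: Im_monomial_def intro!: prod.neutral dest: OT_cover_Im_pos)
next
  case (Cons k I)
  have "yexp s (k # I) = (\<lambda>i. scale_yexp s k i + yexp s I i)"
    by auto
  then have "\<epsilon> powr eexp s (k # I) * Im_monomial s (yexp s (k # I)) z
      = (\<epsilon> powr scale_eexp s k * Im_monomial s (scale_yexp s k) z) * (\<epsilon> powr eexp s I * Im_monomial s (yexp s I) z)"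
    by (simp add: powr_add Im_monomial_add)
  also have "\<dots> = metric_scale s \<epsilon> z k * (\<Prod>r<length I. metric_scale s \<epsilon> z (I!r))"
    using metric_scale_eq_monomial[OF z \<epsilon>] Cons by simp
  finally show ?case by (simp only: length_Cons prod.lessThan_Suc_shift nth_Cons_0 nth_Cons_Suc)
qed

lemma inverse_prod_metric_scale_eq_monomial:
  assumes z: "z \<in> OT_cover s" and \<epsilon>: "0 < \<epsilon>"
  shows "\<epsilon> powr (- eexp s I) * Im_monomial s (\<lambda>i. - yexp s I i) z
    = 1 / (\<Prod>r<length I. metric_scale s \<epsilon> z (I!r))"
  unfolding Im_monomial_uminus[OF z] prod_metric_scale_eq_monomial[OF z \<epsilon>, symmetric]
  by (simp add: powr_minus divide_inverse)

lemma monomial_scaledI: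
  assumes "0 < \<epsilon>" "cmod c \<le> C"
    and "\<And>z. z \<in> OT_cover s \<Longrightarrow> \<phi> z = c * complex_of_real (\<Prod>r<length I. metric_scale s \<epsilon> z (I!r))"
  shows "monomial s \<epsilon> (yexp s I) (eexp s I) C \<phi>"
  unfolding monomial_def using assms prod_metric_scale_eq_monomial by auto

lemma monomial_inverse_scaledI:
  assumes "0 < \<epsilon>" "cmod c \<le> C"
    and "\<And>z. z \<in> OT_cover s \<Longrightarrow> \<phi> z = c * complex_of_real (1 / (\<Prod>r<length I. metric_scale s \<epsilon> z (I!r)))"
  shows "monomial s \<epsilon> (\<lambda>i. - yexp s I i) (- eexp s I) C \<phi>"
  unfolding monomial_def using assms inverse_prod_metric_scale_eq_monomial by auto

section \<open>Wirtinger derivatives of monomials\<close>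

lemma dX_Im_monomial:
  assumes "\<forall>w\<in>OT_cover s. \<phi> w = K * complex_of_real (Im_monomial s E w)" "z \<in> OT_cover s"
  shows "dX k \<phi> z = 0"
proof -
  have "\<phi> (z(k := z k + of_real r)) = \<phi> z" for r :: real
  proof -
    have "z(k := z k + of_real r) \<in> OT_cover s" using assms(2) by (auto simp: OT_cover_def)
    moreover have "Im_monomial s E (z(k := z k + of_real r)) = Im_monomial s E z"
      unfolding Im_monomial_def by (rule prod.cong) auto
    ultimately show ?thesis using assms by simp
  qed
  then show ?thesis unfolding dX_def by simp
qed

lemma dY_Im_monomial_last:
  assumes "\<forall>w\<in>OT_cover s. \<phi> w = K * complex_of_real (Im_monomial s E w)" "z \<in> OT_cover s" "s \<le> k"
  shows "dY k \<phi> z = 0"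
proof -
  have "\<phi> (z(k := z k + \<i> * of_real r)) = \<phi> z" for r :: real
  proof -
    have "z(k := z k + \<i> * of_real r) \<in> OT_cover s" using assms(2,3) by (auto simp: OT_cover_def)
    moreover have "Im_monomial s E (z(k := z k + \<i> * of_real r)) = Im_monomial s E z"
      unfolding Im_monomial_def by (rule prod.cong) (use assms(3) in auto)
    ultimately show ?thesis using assms by simp
  qed
  then show ?thesis unfolding dY_def by simp
qed

lemma dY_Im_monomial:
  assumes \<phi>: "\<forall>w\<in>OT_cover s. \<phi> w = K * complex_of_real (Im_monomial s E w)"
    and z: "z \<in> OT_cover s" and k: "k < s"
  shows "dY k \<phi> z = K * complex_of_real (E k * Im_monomial s (\<lambda>i. E i + scale_yexp s k i) z)"
proof -
  define y where "y = Im (z k)"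
  have y: "0 < y" using z k OT_cover_Im_pos y_def by blast
  define Q where "Q = (\<Prod>i\<in>{..<s}-{k}. Im (z i) powr E i)"
  define f where "f = (\<lambda>r::real. K * complex_of_real (Q * (y + r) powr E k))"
  have f: "\<phi> (z(k := z k + \<i> * of_real r)) = f r" if "r \<in> {-y<..}" for r
  proof -
    have "z(k := z k + \<i> * of_real r) \<in> OT_cover s"
      using z k that by (auto simp: OT_cover_def y_def)
    moreover have "Im_monomial s E (z(k := z k + \<i> * of_real r)) = (y + r) powr E k * Q"
      unfolding Im_monomial_remove[OF k] Q_def y_def by (auto intro!: prod.cong)
    ultimately show ?thesis using \<phi> by (simp add: f_def mult_ac)
  qed
  have "((\<lambda>r. (y + r) powr E k) has_real_derivative E k * (y + 0) powr (E k - real 1) * 1) (at 0)"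
    by (rule DERIV_fun_powr) (use y in \<open>auto intro!: derivative_eq_intros\<close>)
  then have "(f has_vector_derivative K * complex_of_real (Q * (E k * y powr (E k - 1)))) (at 0)"
    unfolding f_def
    by (intro has_vector_derivative_mult_right has_vector_derivative_of_real) (use DERIV_cmult in simp)
  then have "((\<lambda>r. \<phi> (z(k := z k + \<i> * of_real r))) has_vector_derivative
        K * complex_of_real (Q * (E k * y powr (E k - 1)))) (at 0)"
    by (rule has_vector_derivative_transform_within_open[of _ _ _ "{-y<..}"]) (use y f in auto)
  moreover have "Im_monomial s (\<lambda>i. E i + scale_yexp s k i) z = y powr (E k - 1) * Q"
    unfolding Im_monomial_remove[OF k] Q_def y_def
    by (auto simp: scale_yexp_def k intro!: prod.cong)
  ultimately show ?thesis unfolding dY_def by (simp add: vector_derivative_at mult_ac)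
qed

lemma monomial_Wirtinger:
  assumes \<phi>: "monomial s \<epsilon> E e C \<phi>" and k: "k < Suc s" and B: "0 \<le> B" "\<forall>i<s. \<bar>E i\<bar> \<le> B"
    and D: "\<And>z. z \<in> OT_cover s \<Longrightarrow> D z = (dX k \<phi> z + \<sigma> * dY k \<phi> z) / 2" and \<sigma>: "cmod \<sigma> = 1"
  shows "monomial s \<epsilon> (\<lambda>i. E i + scale_yexp s k i) (e + scale_eexp s k) (C * B) D"
proof -
  obtain c where c: "cmod c \<le> C"
    and \<phi>c: "\<forall>w\<in>OT_cover s. \<phi> w = (c * complex_of_real (\<epsilon> powr e)) * complex_of_real (Im_monomial s E w)"
    using \<phi> unfolding monomial_def by (auto simp: mult_ac)
  have C: "0 \<le> C" using monomial_nonneg \<phi> by blast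
  show ?thesis
  proof (cases "k < s")
    case True
    have "cmod (c * (\<sigma> / 2) * complex_of_real (E k)) = cmod c * \<bar>E k\<bar> / 2"
      by (simp add: norm_mult \<sigma>)
    also have "\<dots> \<le> C * B / 2" using c B True C by (simp add: mult_mono divide_right_mono)
    also have "\<dots> \<le> C * B" using B C by simp
    finally show ?thesis unfolding monomial_def
      using True
      by (intro exI[of _ "c * (\<sigma> / 2) * E k"])
        (auto simp: D dX_Im_monomial[OF \<phi>c] dY_Im_monomial[OF \<phi>c] scale_eexp_def)
  next
    case False
    then show ?thesis unfolding monomial_def
      by (intro exI[of _ 0])
        (use C B in \<open>auto simp: D dX_Im_monomial[OF \<phi>c] dY_Im_monomial_last[OF \<phi>c]\<close>)
  qed
qed

lemma monomial_del:
  assumes "monomial s \<epsilon> E e C \<phi>" "k < Suc s" "0 \<le> B" "\<forall>i<s. \<bar>E i\<bar> \<le> B"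
  shows "monomial s \<epsilon> (\<lambda>i. E i + scale_yexp s k i) (e + scale_eexp s k) (C * B) (del k \<phi>)"
  by (rule monomial_Wirtinger[OF assms, of _ "-\<i>"]) (auto simp: del_def)

lemma monomial_delbar:
  assumes "monomial s \<epsilon> E e C \<phi>" "k < Suc s" "0 \<le> B" "\<forall>i<s. \<bar>E i\<bar> \<le> B"
  shows "monomial s \<epsilon> (\<lambda>i. E i + scale_yexp s k i) (e + scale_eexp s k) (C * B) (delbar k \<phi>)"
  by (rule monomial_Wirtinger[OF assms, of _ "\<i>"]) (auto simp: delbar_def)

section \<open>The metric \<open>g\<^sub>t\<close> and its inverse\<close>

definition gt_real :: "nat \<Rightarrow> real \<Rightarrow> point \<Rightarrow> nat \<Rightarrow> nat \<Rightarrow> real" where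
  "gt_real s \<epsilon> z a b = (if a < s \<and> b < s then ((if a = b then 1 else 0) + \<epsilon>) / (4 * Im (z a) * Im (z b))
     else if a = s \<and> b = s then \<epsilon> * (\<Prod>i<s. Im (z i)) else 0)"

text \<open>On the block \<open>a, b < s\<close>, \<open>g\<^sub>t\<close> is a diagonal matrix plus a rank one matrix, so its inverse
  is given by the Sherman--Morrison formula.\<close>

definition gt_inv_real :: "nat \<Rightarrow> real \<Rightarrow> point \<Rightarrow> nat \<Rightarrow> nat \<Rightarrow> real" where
  "gt_inv_real s \<epsilon> z b c = (if b < s \<and> c < s then
       4 * Im (z b) * Im (z c) * ((if b = c then 1 else 0) - \<epsilon> / (1 + \<epsilon> * s))
     else if b = s \<and> c = s then 1 / (\<epsilon> * (\<Prod>i<s. Im (z i))) else 0)"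

lemma gt_eq_gt_real: "gt s t z a b = complex_of_real (gt_real s (exp (- t)) z a b)"
  unfolding gt_def gOT_def alpha_c_def beta_c_def gamma_c_def gt_real_def
  by (auto simp: power2_eq_square algebra_simps add_divide_distrib)

lemma sum_rank_one_inverse:
  fixes \<epsilon> :: real and s :: nat
  assumes "1 + \<epsilon> * s \<noteq> 0" "a < s" "c < s"
  shows "(\<Sum>b<s. ((if a = b then 1 else 0) + \<epsilon>) * ((if b = c then 1 else 0) - \<epsilon> / (1 + \<epsilon> * s)))
    = (if a = c then 1 else 0)"
proof -
  define \<kappa> where "\<kappa> = \<epsilon> / (1 + \<epsilon> * s)"
  have "(\<Sum>b<s. ((if a = b then 1 else 0) + \<epsilon>) * ((if b = c then 1 else 0) - \<kappa>))
      = (\<Sum>b<s. (if a = b then 1 else 0) * ((if b = c then 1 else 0) - \<kappa>))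
        + \<epsilon> * (\<Sum>b<s. (if b = c then 1 else 0) - \<kappa>)"
    by (simp add: distrib_right sum.distrib sum_distrib_left)
  also have "\<dots> = (if a = c then 1 else 0) - \<kappa> + \<epsilon> * (1 - s * \<kappa>)"
    using assms by (simp add: sum_subtractf of_bool_def[symmetric])
  also have "\<epsilon> * (1 - s * \<kappa>) = \<kappa>"
    using assms(1) by (simp add: \<kappa>_def field_simps)
  finally show ?thesis by (simp add: \<kappa>_def)
qed

lemma gt_real_inverse:
  assumes z: "z \<in> OT_cover s" and \<epsilon>: "0 < \<epsilon>" and a: "a < Suc s" and c: "c < Suc s"
  shows "(\<Sum>b<Suc s. gt_real s \<epsilon> z a b * gt_inv_real s \<epsilon> z b c) = (if a = c then 1 else 0)"
proof (cases "a < s \<and> c < s")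
  case True
  define \<kappa> where "\<kappa> = \<epsilon> / (1 + \<epsilon> * s)"
  have y: "0 < Im (z a)" "0 < Im (z c)" using True z by (auto dest: OT_cover_Im_pos)
  have summand: "gt_real s \<epsilon> z a b * gt_inv_real s \<epsilon> z b c
      = ((if a = b then 1 else 0) + \<epsilon>) * ((if b = c then 1 else 0) - \<kappa>) * (Im (z c) / Im (z a))"
    if "b < s" for b
    using True that y OT_cover_Im_pos[OF z that]
    by (simp add: gt_real_def gt_inv_real_def \<kappa>_def field_simps)
  have "(\<Sum>b<Suc s. gt_real s \<epsilon> z a b * gt_inv_real s \<epsilon> z b c)
      = (\<Sum>b<s. gt_real s \<epsilon> z a b * gt_inv_real s \<epsilon> z b c)"
    using True by (simp add: gt_real_def)
  also have "\<dots> = (\<Sum>b<s. ((if a = b then 1 else 0) + \<epsilon>) * ((if b = c then 1 else 0) - \<kappa>)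
      * (Im (z c) / Im (z a)))"
    by (rule sum.cong) (simp_all only: lessThan_iff summand)
  also have "\<dots> = (\<Sum>b<s. ((if a = b then 1 else 0) + \<epsilon>) * ((if b = c then 1 else 0) - \<kappa>))
      * (Im (z c) / Im (z a))"
    by (rule sum_distrib_right[symmetric])
  also have "\<dots> = (if a = c then 1 else 0)"
  proof -
    have ne: "1 + \<epsilon> * s \<noteq> 0" using \<epsilon> by (smt (verit) of_nat_0_le_iff mult_nonneg_nonneg)
    show ?thesis unfolding \<kappa>_def sum_rank_one_inverse[OF ne True[THEN conjunct1] True[THEN conjunct2]]
      using y by simp
  qed
  finally show ?thesis .
next
  case False
  then show ?thesis
    using a c \<epsilon> z OT_cover_prod_Im_pos[OF z]
    by (auto simp: gt_real_def gt_inv_real_def dest: OT_cover_Im_pos)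
qed

lemma ginv_eqI:
  assumes right: "\<And>a c. a < m \<Longrightarrow> c < m \<Longrightarrow> (\<Sum>b<m. g z a b * H b c) = (if a = c then 1 else 0)"
    and left: "\<And>a c. a < m \<Longrightarrow> c < m \<Longrightarrow> (\<Sum>b<m. H a b * g z b c) = (if a = c then 1 else 0)"
    and outside: "\<And>b c. \<not> (b < m \<and> c < m) \<Longrightarrow> H b c = 0"
  shows "ginv m g z = H"
  unfolding ginv_def
proof (rule some_equality)
  fix X
  assume X: "(\<forall>a<m. \<forall>c<m. (\<Sum>b<m. g z a b * X b c) = (if a = c then 1 else 0))
    \<and> (\<forall>b c. \<not> (b < m \<and> c < m) \<longrightarrow> X b c = 0)"
  show "X = H"
  proof (intro ext)
    fix b c
    show "X b c = H b c"
    proof (cases "b < m \<and> c < m")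
      case True
      have "X b c = (\<Sum>a<m. if b = a then X a c else 0)"
        using True by simp
      also have "\<dots> = (\<Sum>a<m. (\<Sum>d<m. H b d * g z d a) * X a c)"
        using True by (intro sum.cong) (simp_all add: left)
      also have "\<dots> = (\<Sum>d<m. H b d * (\<Sum>a<m. g z d a * X a c))"
        unfolding sum_distrib_right sum_distrib_left mult.assoc by (rule sum.swap)
      also have "\<dots> = (\<Sum>d<m. if d = c then H b d else 0)"
        using X True by (intro sum.cong) auto
      finally show ?thesis using True by simp
    qed (use X outside in auto)
  qed
qed (use right outside in auto)

lemma ginv_gt:
  assumes z: "z \<in> OT_cover s"
  shows "ginv (Suc s) (gt s t) z = (\<lambda>b c. complex_of_real (gt_inv_real s (exp (- t)) z b c))"
proof (rule ginv_eqI)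
  have sym: "gt_real s \<epsilon> z a b = gt_real s \<epsilon> z b a" "gt_inv_real s \<epsilon> z a b = gt_inv_real s \<epsilon> z b a"
    for \<epsilon> a b
    unfolding gt_real_def gt_inv_real_def by (auto simp: mult_ac)
  show "(\<Sum>b<Suc s. gt s t z a b * complex_of_real (gt_inv_real s (exp (- t)) z b c)) = (if a = c then 1 else 0)"
    if "a < Suc s" "c < Suc s" for a c
    using gt_real_inverse[OF z _ that] unfolding gt_eq_gt_real by (simp flip: of_real_mult of_real_sum)
  show "(\<Sum>b<Suc s. complex_of_real (gt_inv_real s (exp (- t)) z a b) * gt s t z b c) = (if a = c then 1 else 0)"
    if "a < Suc s" "c < Suc s" for a c
    using gt_real_inverse[OF z _ that(2,1)] unfolding gt_eq_gt_real
    by (auto simp: sym mult.commute simp flip: of_real_mult of_real_sum)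
qed (auto simp: gt_inv_real_def)

lemma monomial_gt:
  assumes t: "0 \<le> t" and a: "a < Suc s" and b: "b < Suc s"
  shows "monomial s (exp (- t)) (yexp s [a, b]) (eexp s [a, b]) 1 (\<lambda>z. gt s t z a b)"
proof -
  define \<epsilon> where "\<epsilon> = exp (- t)"
  have \<epsilon>: "0 < \<epsilon>" "\<epsilon> \<le> 1" using t by (auto simp: \<epsilon>_def)
  define c where "c = (if a < s \<and> b < s then ((if a = b then 1 else 0) + \<epsilon>) / 4
                       else if a = s \<and> b = s then 1 else (0::real))"
  have "monomial s \<epsilon> (yexp s [a, b]) (eexp s [a, b]) 1 (\<lambda>z. gt s t z a b)"
  proof (rule monomial_scaledI[OF \<epsilon>(1), where c = "complex_of_real c"])
    show "cmod (complex_of_real c) \<le> 1" using \<epsilon> unfolding c_def by auto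
    fix z assume z: "z \<in> OT_cover s"
    have "gt_real s \<epsilon> z a b = c * (metric_scale s \<epsilon> z a * metric_scale s \<epsilon> z b)"
      using a b metric_scale_sq[OF z \<epsilon>(1), of s]
      by (auto simp: gt_real_def c_def metric_scale_def)
    then show "gt s t z a b = complex_of_real c *
        complex_of_real (\<Prod>r<length [a, b]. metric_scale s \<epsilon> z ([a, b] ! r))"
      by (simp add: gt_eq_gt_real \<epsilon>_def[symmetric] numeral_2_eq_2 lessThan_Suc)
  qed
  then show ?thesis by (simp add: \<epsilon>_def)
qed

lemma monomial_ginv:
  assumes t: "0 \<le> t" and a: "a < Suc s" and b: "b < Suc s"
  shows "monomial s (exp (- t)) (\<lambda>i. - yexp s [a, b] i) (- eexp s [a, b]) 4
    (\<lambda>z. ginv (Suc s) (gt s t) z a b)"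
proof -
  define \<epsilon> where "\<epsilon> = exp (- t)"
  have \<epsilon>: "0 < \<epsilon>" "\<epsilon> \<le> 1" using t by (auto simp: \<epsilon>_def)
  define \<kappa> where "\<kappa> = \<epsilon> / (1 + \<epsilon> * s)"
  have \<kappa>: "0 \<le> \<kappa>" "\<kappa> \<le> 1"
    using \<epsilon> by (auto simp: \<kappa>_def divide_le_eq add_pos_nonneg intro: order_trans[of _ 1])
  define c where "c = (if a < s \<and> b < s then 4 * ((if a = b then 1 else 0) - \<kappa>)
                       else if a = s \<and> b = s then 1 else (0::real))"
  have "monomial s \<epsilon> (\<lambda>i. - yexp s [a, b] i) (- eexp s [a, b]) 4 (\<lambda>z. ginv (Suc s) (gt s t) z a b)"
  proof (rule monomial_inverse_scaledI[OF \<epsilon>(1), where c = "complex_of_real c"])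
    show "cmod (complex_of_real c) \<le> 4" using \<kappa> unfolding c_def by auto
    fix z assume z: "z \<in> OT_cover s"
    have "gt_inv_real s \<epsilon> z a b = c * (1 / (metric_scale s \<epsilon> z a * metric_scale s \<epsilon> z b))"
      using a b metric_scale_sq[OF z \<epsilon>(1), of s]
      by (auto simp: gt_inv_real_def c_def metric_scale_def \<kappa>_def)
    then show "ginv (Suc s) (gt s t) z a b = complex_of_real c *
        complex_of_real (1 / (\<Prod>r<length [a, b]. metric_scale s \<epsilon> z ([a, b] ! r)))"
      by (simp add: ginv_gt[OF z] \<epsilon>_def[symmetric] numeral_2_eq_2 lessThan_Suc)
  qed
  then show ?thesis by (simp add: \<epsilon>_def)
qed

lemma monomial_del_gt:
  assumes "0 \<le> t" "a < Suc s" "b < Suc s" "c < Suc s"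
  shows "monomial s (exp (- t)) (yexp s [a, b, c]) (eexp s [a, b, c]) 2 (del a (\<lambda>w. gt s t w b c))"
  by (rule monomial_cong[OF monomial_del[OF monomial_gt[OF assms(1,3,4)] assms(2), of 2]])
    (use abs_yexp_le[of s "[b, c]"] in auto)

lemma monomial_delbar_gt:
  assumes "0 \<le> t" "a < Suc s" "b < Suc s" "c < Suc s"
  shows "monomial s (exp (- t)) (yexp s [a, b, c]) (eexp s [a, b, c]) 2 (delbar a (\<lambda>w. gt s t w b c))"
  by (rule monomial_cong[OF monomial_delbar[OF monomial_gt[OF assms(1,3,4)] assms(2), of 2]])
    (use abs_yexp_le[of s "[b, c]"] in auto)

lemma norm_ginv_le:
  assumes t: "0 \<le> t" and z: "z \<in> OT_cover s" and a: "a < Suc s" and b: "b < Suc s"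
  shows "cmod (ginv (Suc s) (gt s t) z a b)
    \<le> 4 / (metric_scale s (exp (- t)) z a * metric_scale s (exp (- t)) z b)"
  using norm_le_monomial[OF monomial_ginv[OF t a b] z]
  unfolding inverse_prod_metric_scale_eq_monomial[OF z exp_gt_zero]
  by (simp add: numeral_2_eq_2 lessThan_Suc mult_ac)

lemma monomial_Chr:
  assumes t: "0 \<le> t" and i: "i < Suc s" and k: "k < Suc s" and p: "p < Suc s"
  shows "monomial s (exp (- t)) (\<lambda>j. yexp s [i, k] j - yexp s [p] j) (eexp s [i, k] - eexp s [p])
    (8 * Suc s) (\<lambda>z. Chr (Suc s) (gt s t) z i k p)"
proof -
  have "monomial s (exp (- t)) (\<lambda>j. yexp s [i, k] j - yexp s [p] j) (eexp s [i, k] - eexp s [p])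
    8 (\<lambda>z. ginv (Suc s) (gt s t) z q p * del i (\<lambda>w. gt s t w k q) z)" if q: "q < Suc s" for q
    by (rule monomial_cong[OF monomial_mult[OF _ monomial_ginv[OF t q p] monomial_del_gt[OF t i k q]]]) auto
  then have "monomial s (exp (- t)) (\<lambda>j. yexp s [i, k] j - yexp s [p] j) (eexp s [i, k] - eexp s [p])
    (\<Sum>q<Suc s. 8) (\<lambda>z. \<Sum>q<Suc s. ginv (Suc s) (gt s t) z q p * del i (\<lambda>w. gt s t w k q) z)"
    by (intro monomial_sum) auto
  then show ?thesis by (rule monomial_cong) (auto simp: Chr_def)
qed

section \<open>Tensors with bounded frame components\<close>

text \<open>Dividing the component \<open>A\<^sub>I\<close> by \<open>\<Prod>\<^sub>r metric_scale (I ! r)\<close> gives the component in a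
  \<open>g\<^sub>t\<close>-orthonormal frame up to bounded factors, so \<open>C\<close> bounds the frame components of \<open>A\<close>.\<close>

definition weighted_tensor :: "nat \<Rightarrow> real \<Rightarrow> nat \<Rightarrow> real \<Rightarrow> tensor \<Rightarrow> bool" where
  "weighted_tensor s \<epsilon> n C A \<longleftrightarrow> (\<forall>I. length I = n \<and> set I \<subseteq> {..<Suc s} \<longrightarrow>
     monomial s \<epsilon> (yexp s I) (eexp s I) C (\<lambda>z. A z I))"

lemma weighted_tensorD:
  "weighted_tensor s \<epsilon> n C A \<Longrightarrow> length I = n \<Longrightarrow> set I \<subseteq> {..<Suc s} \<Longrightarrow>
    monomial s \<epsilon> (yexp s I) (eexp s I) C (\<lambda>z. A z I)"
  unfolding weighted_tensor_def by blast

lemma weighted_tensor_nonneg: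
  assumes "weighted_tensor s \<epsilon> n C A"
  shows "0 \<le> C"
proof -
  have "monomial s \<epsilon> (yexp s (replicate n 0)) (eexp s (replicate n 0)) C (\<lambda>z. A z (replicate n 0))"
    by (rule weighted_tensorD[OF assms]) (auto simp: set_replicate_conv_if)
  then show ?thesis by (rule monomial_nonneg)
qed

lemma weighted_tensor_torsion:
  assumes t: "0 \<le> t"
  shows "weighted_tensor s (exp (- t)) 3 4 (torsion (gt s t))"
  unfolding weighted_tensor_def
proof (intro allI impI)
  fix I :: "nat list"
  assume I: "length I = 3 \<and> set I \<subseteq> {..<Suc s}"
  then obtain a b c where abc: "I = [a, b, c]" by (auto simp: numeral_3_eq_3 length_Suc_conv)
  then have v: "a < Suc s" "b < Suc s" "c < Suc s" using I by auto
  have "monomial s (exp (- t)) (yexp s I) (eexp s I) 2 (del a (\<lambda>w. gt s t w b c))"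
    "monomial s (exp (- t)) (yexp s I) (eexp s I) 2 (del b (\<lambda>w. gt s t w a c))"
    by (rule monomial_cong[OF monomial_del_gt[OF t]]; use v in \<open>simp add: abc\<close>)+
  from monomial_diff[OF this]
  show "monomial s (exp (- t)) (yexp s I) (eexp s I) 4 (\<lambda>z. torsion (gt s t) z I)"
    by (rule monomial_cong) (auto simp: abc torsion_def)
qed

lemma weighted_tensor_dbarT:
  assumes T: "weighted_tensor s \<epsilon> 3 C T"
  shows "weighted_tensor s \<epsilon> 4 (6 * C) (dbarT T)"
  unfolding weighted_tensor_def
proof (intro allI impI)
  fix I :: "nat list"
  assume I: "length I = 4 \<and> set I \<subseteq> {..<Suc s}"
  then obtain a b c d where abcd: "I = [a, b, c, d]" by (auto simp: numeral_eq_Suc length_Suc_conv)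
  then have v: "a < Suc s" "b < Suc s" "c < Suc s" "d < Suc s" using I by auto
  have "monomial s \<epsilon> (yexp s [a, b, d]) (eexp s [a, b, d]) C (\<lambda>z. T z [a, b, d])"
    by (rule weighted_tensorD[OF T]) (use v in simp_all)
  then have "monomial s \<epsilon> (yexp s I) (eexp s I) (C * 3) (delbar c (\<lambda>w. T w [a, b, d]))"
    by (rule monomial_cong[OF monomial_delbar[OF _ v(3), where B = 3]])
      (use abs_yexp_le[of s "[a, b, d]"] in \<open>simp_all add: abcd ac_simps\<close>)
  moreover have "monomial s \<epsilon> (yexp s [a, b, c]) (eexp s [a, b, c]) C (\<lambda>z. T z [a, b, c])"
    by (rule weighted_tensorD[OF T]) (use v in simp_all)
  then have "monomial s \<epsilon> (yexp s I) (eexp s I) (C * 3) (delbar d (\<lambda>w. T w [a, b, c]))"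
    by (rule monomial_cong[OF monomial_delbar[OF _ v(4), where B = 3]])
      (use abs_yexp_le[of s "[a, b, c]"] in \<open>simp_all add: abcd ac_simps\<close>)
  ultimately show "monomial s \<epsilon> (yexp s I) (eexp s I) (6 * C) (\<lambda>z. dbarT T z I)"
    by (rule monomial_cong[OF monomial_diff]) (auto simp: abcd dbarT_def)
qed

lemma weighted_tensor_curv:
  assumes t: "0 \<le> t"
  shows "weighted_tensor s (exp (- t)) 4 (6 + 16 * (Suc s)\<^sup>2) (curv (Suc s) (gt s t))"
  unfolding weighted_tensor_def
proof (intro allI impI)
  fix I :: "nat list"
  assume I: "length I = 4 \<and> set I \<subseteq> {..<Suc s}"
  then obtain a b c d where abcd: "I = [a, b, c, d]" by (auto simp: numeral_eq_Suc length_Suc_conv)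
  then have v: "a < Suc s" "b < Suc s" "c < Suc s" "d < Suc s" using I by auto
  have "monomial s (exp (- t)) (yexp s I) (eexp s I) 6 (del a (delbar b (\<lambda>w. gt s t w c d)))"
    by (rule monomial_cong[OF monomial_del[OF monomial_delbar_gt[OF t v(2-4)] v(1), of 3]])
      (use abs_yexp_le[of s "[b, c, d]"] in \<open>auto simp: abcd\<close>)
  then have second_derivative: "monomial s (exp (- t)) (yexp s I) (eexp s I) 6
      (\<lambda>z. - del a (delbar b (\<lambda>w. gt s t w c d)) z)"
    by (rule monomial_uminus)
  have "monomial s (exp (- t)) (yexp s I) (eexp s I) 16
      (\<lambda>z. ginv (Suc s) (gt s t) z q p * del a (\<lambda>w. gt s t w c q) z * delbar b (\<lambda>w. gt s t w p d) z)"
    if q: "q < Suc s" and p: "p < Suc s" for p q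
    by (rule monomial_cong[OF monomial_mult[OF _ monomial_mult[OF _ monomial_ginv[OF t q p]
          monomial_del_gt[OF t v(1,3) q]] monomial_delbar_gt[OF t v(2) p v(4)]]])
      (auto simp: abcd)
  then have "monomial s (exp (- t)) (yexp s I) (eexp s I) (\<Sum>p<Suc s. \<Sum>q<Suc s. 16)
      (\<lambda>z. \<Sum>p<Suc s. \<Sum>q<Suc s. ginv (Suc s) (gt s t) z q p * del a (\<lambda>w. gt s t w c q) z
        * delbar b (\<lambda>w. gt s t w p d) z)"
    by (intro monomial_sum) auto
  from monomial_add[OF second_derivative this]
  show "monomial s (exp (- t)) (yexp s I) (eexp s I) (6 + 16 * (Suc s)\<^sup>2) (\<lambda>z. curv (Suc s) (gt s t) z I)"
    by (rule monomial_cong) (auto simp: abcd curv_def power2_eq_square algebra_simps)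
qed

text \<open>The Christoffel symbol \<open>\<Gamma>\<^sup>q\<^sub>a\<^sub>k\<close> has the weight of \<open>[a, k]\<close> minus that of \<open>[q]\<close>, so replacing
  the slot \<open>k\<close> of a component of weight \<open>J\<close> by \<open>q\<close> gives a term of the weight of \<open>a # J\<close>.\<close>

lemma weighted_tensor_connection_derivative:
  fixes C :: real
  assumes \<epsilon>: "0 < \<epsilon>" and A: "weighted_tensor s \<epsilon> n C A"
    and \<Gamma>: "\<And>r a k q. a < Suc s \<Longrightarrow> k < Suc s \<Longrightarrow> q < Suc s \<Longrightarrow> r < n \<Longrightarrow>
      monomial s \<epsilon> (\<lambda>j. yexp s [a, k] j - yexp s [q] j) (eexp s [a, k] - eexp s [q]) (8 * Suc s)
        (\<lambda>z. \<Gamma> r z a k q)"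
    and D: "\<And>E e C \<phi> k B. monomial s \<epsilon> E e C \<phi> \<Longrightarrow> k < Suc s \<Longrightarrow> 0 \<le> B \<Longrightarrow> \<forall>i<s. \<bar>E i\<bar> \<le> B \<Longrightarrow>
      monomial s \<epsilon> (\<lambda>i. E i + scale_yexp s k i) (e + scale_eexp s k) (C * B) (D k \<phi>)"
    and N: "\<And>z a J. z \<in> OT_cover s \<Longrightarrow> N z (a # J) = D a (\<lambda>w. A w J) z
      - (\<Sum>r<length J. \<Sum>q<Suc s. \<Gamma> r z a (J!r) q * A z (J[r := q]))"
  shows "weighted_tensor s \<epsilon> (Suc n) (C * n + n * (Suc s * (8 * Suc s * C))) N"
  unfolding weighted_tensor_def
proof (intro allI impI)
  fix I :: "nat list"
  assume I: "length I = Suc n \<and> set I \<subseteq> {..<Suc s}"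
  then obtain a J where aJ: "I = a # J" by (cases I) auto
  have a: "a < Suc s" and J: "length J = n" "set J \<subseteq> {..<Suc s}" using I aJ by auto
  have derivative: "monomial s \<epsilon> (yexp s I) (eexp s I) (C * n) (D a (\<lambda>w. A w J))"
    by (rule monomial_cong[OF D[OF weighted_tensorD[OF A J] a, where B = "real n"]]) (use abs_yexp_le[of s J] J in \<open>auto simp: aJ\<close>)
  have "monomial s \<epsilon> (yexp s I) (eexp s I) (8 * Suc s * C) (\<lambda>z. \<Gamma> r z a (J!r) q * A z (J[r := q]))"
    if r: "r < n" and q: "q < Suc s" for r q
  proof -
    have Jr: "J!r < Suc s" using J r nth_mem by blast
    have "set (J[r := q]) \<subseteq> {..<Suc s}" using J(2) q set_update_subset_insert[of J r q] by auto
    from monomial_mult[OF \<epsilon> \<Gamma>[OF a Jr q r] weighted_tensorD[OF A _ this]] show ?thesis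
      by (rule monomial_cong) (use r J in \<open>auto simp: aJ yexp_update eexp_update\<close>)
  qed
  then have "monomial s \<epsilon> (yexp s I) (eexp s I) (\<Sum>r<n. \<Sum>q<Suc s. 8 * Suc s * C)
      (\<lambda>z. \<Sum>r<n. \<Sum>q<Suc s. \<Gamma> r z a (J!r) q * A z (J[r := q]))"
    by (intro monomial_sum) auto
  from monomial_diff[OF derivative this]
  show "monomial s \<epsilon> (yexp s I) (eexp s I) (C * n + n * (Suc s * (8 * Suc s * C))) (\<lambda>z. N z I)"
    by (rule monomial_cong) (auto simp: aJ N J)
qed

lemma weighted_tensor_nabla:
  fixes C :: real
  assumes t: "0 \<le> t" and A: "weighted_tensor s (exp (- t)) n C A" and ks: "length ks = n"
  shows "weighted_tensor s (exp (- t)) (Suc n) (C * n + n * (Suc s * (8 * Suc s * C)))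
    (nabla (Suc s) (gt s t) ks A)"
proof (rule weighted_tensor_connection_derivative[OF exp_gt_zero A, where D = del
    and \<Gamma> = "\<lambda>r z a k q. if ks ! r then 0 else Chr (Suc s) (gt s t) z a k q"])
  show "monomial s (exp (- t)) (\<lambda>j. yexp s [a, k] j - yexp s [q] j) (eexp s [a, k] - eexp s [q])
      (8 * Suc s) (\<lambda>z. if ks ! r then 0 else Chr (Suc s) (gt s t) z a k q)"
    if "a < Suc s" "k < Suc s" "q < Suc s" for a k q r
    using monomial_Chr[OF t that] by (cases "ks ! r") (auto intro: monomial_zero)
qed (auto simp: nabla_def ks intro: monomial_del)

lemma weighted_tensor_nablabar:
  fixes C :: real
  assumes t: "0 \<le> t" and A: "weighted_tensor s (exp (- t)) n C A" and ks: "length ks = n"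
  shows "weighted_tensor s (exp (- t)) (Suc n) (C * n + n * (Suc s * (8 * Suc s * C)))
    (nablabar (Suc s) (gt s t) ks A)"
proof (rule weighted_tensor_connection_derivative[OF exp_gt_zero A, where D = delbar
    and \<Gamma> = "\<lambda>r z a k q. if ks ! r then cnj (Chr (Suc s) (gt s t) z a k q) else 0"])
  show "monomial s (exp (- t)) (\<lambda>j. yexp s [a, k] j - yexp s [q] j) (eexp s [a, k] - eexp s [q])
      (8 * Suc s) (\<lambda>z. if ks ! r then cnj (Chr (Suc s) (gt s t) z a k q) else 0)"
    if "a < Suc s" "k < Suc s" "q < Suc s" for a k q r
    using monomial_cnj[OF monomial_Chr[OF t that]] by (cases "ks ! r") (auto intro: monomial_zero)
qed (auto simp: nablabar_def ks intro: monomial_delbar)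

lemma norm_metric_contraction_le:
  assumes t: "0 \<le> t" and z: "z \<in> OT_cover s"
    and I: "length I = length ks" "set I \<subseteq> {..<Suc s}" and J: "length J = length ks" "set J \<subseteq> {..<Suc s}"
  shows "cmod (\<Prod>r<length ks. if ks ! r then ginv (Suc s) (gt s t) z (I!r) (J!r)
      else ginv (Suc s) (gt s t) z (J!r) (I!r))
    \<le> 4 ^ length ks / ((\<Prod>r<length ks. metric_scale s (exp (- t)) z (I!r))
      * (\<Prod>r<length ks. metric_scale s (exp (- t)) z (J!r)))"
proof -
  have "cmod (\<Prod>r<length ks. if ks ! r then ginv (Suc s) (gt s t) z (I!r) (J!r)
      else ginv (Suc s) (gt s t) z (J!r) (I!r))
    \<le> (\<Prod>r<length ks. 4 / (metric_scale s (exp (- t)) z (I!r) * metric_scale s (exp (- t)) z (J!r)))"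
    unfolding prod_norm[symmetric]
  proof (rule prod_mono, intro conjI)
    fix r assume "r \<in> {..<length ks}"
    then have "I!r \<in> set I" "J!r \<in> set J" using I J by auto
    then have v: "I!r < Suc s" "J!r < Suc s" using I J by auto
    show "cmod (if ks ! r then ginv (Suc s) (gt s t) z (I!r) (J!r) else ginv (Suc s) (gt s t) z (J!r) (I!r))
        \<le> 4 / (metric_scale s (exp (- t)) z (I!r) * metric_scale s (exp (- t)) z (J!r))"
      using norm_ginv_le[OF t z v] norm_ginv_le[OF t z v(2,1)] by (auto simp: mult.commute)
  qed simp
  then show ?thesis by (simp add: prod_dividef prod.distrib)
qed

lemma tnorm_le_weighted_tensor:
  fixes C :: real
  assumes t: "0 \<le> t" and A: "weighted_tensor s (exp (- t)) n C A" and ks: "length ks = n"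
    and z: "z \<in> OT_cover s"
  shows "tnorm (Suc s) (gt s t) ks A z \<le> Suc s ^ n * C * 2 ^ n"
proof -
  define \<epsilon> where "\<epsilon> = exp (- t)"
  have \<epsilon>: "0 < \<epsilon>" by (simp add: \<epsilon>_def)
  define L where "L = {I. length I = length ks \<and> set I \<subseteq> {..<Suc s}}"
  have L: "L = {I. set I \<subseteq> {..<Suc s} \<and> length I = n}" unfolding L_def ks by auto
  have C: "0 \<le> C" using weighted_tensor_nonneg[OF A] .
  define V where "V I = (\<Prod>r<n. metric_scale s \<epsilon> z (I!r))" for I
  have V: "0 < V I" for I unfolding V_def using metric_scale_pos[OF z \<epsilon>] by (simp add: prod_pos)
  have component: "cmod (A z I) \<le> C * V I" if "I \<in> L" for I
    using norm_le_monomial[OF weighted_tensorD[OF A] z] prod_metric_scale_eq_monomial[OF z \<epsilon>] that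
    by (simp add: L V_def \<epsilon>_def)
  define G where "G I J = (\<Prod>r<length ks. if ks ! r then ginv (Suc s) (gt s t) z (I!r) (J!r)
        else ginv (Suc s) (gt s t) z (J!r) (I!r))" for I J
  have metric: "cmod (G I J) \<le> 4 ^ n / (V I * V J)" if "I \<in> L" "J \<in> L" for I J
    using norm_metric_contraction_le[OF t z, of I ks J] that unfolding G_def V_def L_def \<epsilon>_def ks
    by simp
  have summand: "cmod (A z I * cnj (A z J) * G I J) \<le> C\<^sup>2 * 4 ^ n" if "I \<in> L" "J \<in> L" for I J
  proof -
    have "cmod (A z I * cnj (A z J) * G I J) = cmod (A z I) * cmod (A z J) * cmod (G I J)"
      by (simp add: norm_mult)
    also have "\<dots> \<le> (C * V I) * (C * V J) * (4 ^ n / (V I * V J))"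
      by (intro mult_mono component metric that) (use C V[of I] V[of J] in simp_all)
    also have "\<dots> = C\<^sup>2 * 4 ^ n" using V[of I] V[of J] by (simp add: field_simps power2_eq_square)
    finally show ?thesis .
  qed
  have "Re (\<Sum>I\<in>L. \<Sum>J\<in>L. A z I * cnj (A z J) * G I J) \<le> (\<Sum>I\<in>L. \<Sum>J\<in>L. cmod (A z I * cnj (A z J) * G I J))"
    by (rule order_trans[OF complex_Re_le_cmod order_trans[OF norm_sum sum_mono[OF norm_sum]]])
  also have "\<dots> \<le> (\<Sum>I\<in>L. \<Sum>J\<in>L. C\<^sup>2 * 4 ^ n)"
    by (intro sum_mono summand)
  also have "\<dots> = (Suc s ^ n * C * 2 ^ n)\<^sup>2"
    by (simp add: L card_lists_length_eq power2_eq_square flip: power_mult_distrib)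
  finally show ?thesis
    unfolding tnorm_def L_def[symmetric] G_def[symmetric] using C real_sqrt_le_mono by fastforce
qed

definition uniformly_weighted :: "nat \<Rightarrow> nat \<Rightarrow> (real \<Rightarrow> tensor) \<Rightarrow> bool" where
  "uniformly_weighted s n A \<longleftrightarrow> (\<exists>C. \<forall>t\<ge>0. weighted_tensor s (exp (- t)) n C (A t))"

lemma uniformly_weighted_torsion: "uniformly_weighted s 3 (\<lambda>t. torsion (gt s t))"
  unfolding uniformly_weighted_def using weighted_tensor_torsion by blast

lemma uniformly_weighted_curv: "uniformly_weighted s 4 (\<lambda>t. curv (Suc s) (gt s t))"
  unfolding uniformly_weighted_def using weighted_tensor_curv by blast

lemma uniformly_weighted_dbarT:
  "uniformly_weighted s 3 T \<Longrightarrow> uniformly_weighted s 4 (\<lambda>t. dbarT (T t))"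
  unfolding uniformly_weighted_def using weighted_tensor_dbarT by blast

lemma uniformly_weighted_nabla:
  "uniformly_weighted s n A \<Longrightarrow> length ks = n \<Longrightarrow>
    uniformly_weighted s (Suc n) (\<lambda>t. nabla (Suc s) (gt s t) ks (A t))"
  unfolding uniformly_weighted_def using weighted_tensor_nabla by blast

lemma uniformly_weighted_nablabar:
  "uniformly_weighted s n A \<Longrightarrow> length ks = n \<Longrightarrow>
    uniformly_weighted s (Suc n) (\<lambda>t. nablabar (Suc s) (gt s t) ks (A t))"
  unfolding uniformly_weighted_def using weighted_tensor_nablabar by blast

lemma tnorm_uniformly_bounded:
  assumes "uniformly_weighted s n A" "length ks = n"
  shows "\<exists>B. \<forall>t z. 0 \<le> t \<and> z \<in> OT_cover s \<longrightarrow> tnorm (Suc s) (gt s t) ks (A t) z \<le> B"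
  using assms tnorm_le_weighted_tensor unfolding uniformly_weighted_def by blast

lemma ex_upper_bound_add:
  fixes f g :: "'a \<Rightarrow> 'b \<Rightarrow> real"
  assumes "\<exists>B. \<forall>x y. P x y \<longrightarrow> f x y \<le> B" "\<exists>B. \<forall>x y. P x y \<longrightarrow> g x y \<le> B"
  shows "\<exists>B. \<forall>x y. P x y \<longrightarrow> f x y + g x y \<le> B"
  using assms by (meson add_mono)

lemma ex_common_upper_bound:
  fixes f g h :: "'a \<Rightarrow> 'b \<Rightarrow> real"
  assumes "\<exists>B. \<forall>x y. P x y \<longrightarrow> f x y \<le> B" "\<exists>B. \<forall>x y. P x y \<longrightarrow> g x y \<le> B"
    "\<exists>B. \<forall>x y. P x y \<longrightarrow> h x y \<le> B"
  shows "\<exists>C. \<forall>x y. P x y \<longrightarrow> f x y \<le> C \<and> g x y \<le> C \<and> h x y \<le> C"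
proof -
  obtain B1 B2 B3 where "\<forall>x y. P x y \<longrightarrow> f x y \<le> B1" "\<forall>x y. P x y \<longrightarrow> g x y \<le> B2"
    "\<forall>x y. P x y \<longrightarrow> h x y \<le> B3"
    using assms by blast
  then show ?thesis by (intro exI[of _ "max B1 (max B2 B3)"]) force
qed

theorem lemma3p4:
  fixes s :: nat
  assumes "s \<ge> 1"
  shows "\<exists>C. \<forall>t z. t \<ge> 0 \<and> z \<in> OT_cover s \<longrightarrow>
    (let m = Suc s; g = gt s t; T = torsion g;
         kT = [False, False, True]; nbT = nablabar m g kT T; kbT = True # kT;
         R = curv m g; kR = [False, True, False, True]
     in tnorm m g kT T z \<le> C
      \<and> tnorm m g [False, False, True, True] (dbarT T) z
          + tnorm m g (False # kT) (nabla m g kT T) z + tnorm m g kR R z \<le> C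
      \<and> tnorm m g (True # kbT) (nablabar m g kbT nbT) z
          + tnorm m g (False # kbT) (nabla m g kbT nbT) z
          + tnorm m g (False # kR) (nabla m g kR R) z \<le> C)"
proof -
  have T: "uniformly_weighted s 3 (\<lambda>t. torsion (gt s t))"
    by (rule uniformly_weighted_torsion)
  have R: "uniformly_weighted s 4 (\<lambda>t. curv (Suc s) (gt s t))"
    by (rule uniformly_weighted_curv)
  have nbT: "uniformly_weighted s 4 (\<lambda>t. nablabar (Suc s) (gt s t) [False, False, True] (torsion (gt s t)))"
    using uniformly_weighted_nablabar[OF T] by simp
  show ?thesis
    unfolding Let_def
    by (intro ex_common_upper_bound ex_upper_bound_add;
        rule tnorm_uniformly_bounded,
        rule T R nbT uniformly_weighted_dbarT[OF T] uniformly_weighted_nabla[OF T]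
          uniformly_weighted_nablabar[OF nbT] uniformly_weighted_nabla[OF nbT]
          uniformly_weighted_nabla[OF R])
      simp_all
qed

end
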